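(* Let $1\le p<\infty$. The Hamming graphs $([\mathbb N]^k,d^{(k)}_{\mathsf H})$, $k\in\mathbb N$, equi-coarsely embed into the Banach space $\big(\bigoplus_{k=1}^\infty\ell_p^k(T^* )\big)_{T^*}$.
   Context: $d^{(k)}_{\mathsf H}(\bar m,\bar n)=|\{j:m_j\ne n_j\}|$ for $\bar m=\{m_1<\dots<m_k\},\bar n=\{n_1<\dots<n_k\}\in[\mathbb N]^k$. $T^*$ is the dual of Tsirelson's space $T$ (completion of $c_{00}$ under $\|x\|_T=\max\{\|x\|_\infty,\frac12\sup\sum_{j=1}^n\|E_j(x)\|_T\}$, supremum over $n$ and finite sets $n\le E_1<\dots<E_n$), with its $1$-unconditional basis $(e_j)$. $\ell_p^k(T^* )$ is the $\ell_p^k$-sum of $k$ copies of $T^*$; $(\bigoplus Y_k)_{T^*}$ consists of $(y_k)$ with $\sum\|y_k\|e_k$ convergent in $T^*$, normed by $\|\sum\|y_k\|e_k\|_{T^*}$. A family $(M_i)$ of metric spaces equi-coarsely embeds into $Y$ if there are non-decreasing $\rho,\omega:[0,\infty)\to[0,\infty)$ with $\lim_{t\to\infty}\rho(t)=\infty$ and maps $f_i:M_i\to Y$ with $\rho(d(x,y))\le d_Y(f_i(x),f_i(y))\le\omega(d(x,y))$ for all $i$ and $x,y\in M_i$. *)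

theory Defs
  imports "HOL-Analysis.Analysis" "HOL-Library.Function_Algebras"
begin

text \<open>Conventions: the basis of Tsirelson's space is indexed by 1,2,3,...;
  vectors are functions nat => real with coordinate 0 forced to be 0.\<close>

definition c00 :: "(nat \<Rightarrow> real) set" where
  "c00 = {x. finite {j. x j \<noteq> 0} \<and> x 0 = 0}"

definition restr :: "nat set \<Rightarrow> (nat \<Rightarrow> real) \<Rightarrow> nat \<Rightarrow> real" where
  "restr E x = (\<lambda>j. if j \<in> E then x j else 0)"

text \<open>Admissible families: n \<le> E_1 < E_2 < ... < E_n, finite nonempty sets
  (E_1,...,E_n are E 0, ..., E (n-1)).\<close>
definition admissible :: "nat \<Rightarrow> (nat \<Rightarrow> nat set) \<Rightarrow> bool" where
  "admissible n E \<longleftrightarrow> n \<ge> 1 \<and> (\<forall>i<n. finite (E i) \<and> E i \<noteq> {})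
     \<and> (\<forall>i. Suc i < n \<longrightarrow> Max (E i) < Min (E (Suc i)))
     \<and> n \<le> Min (E 0)"

fun tnorm_iter :: "nat \<Rightarrow> (nat \<Rightarrow> real) \<Rightarrow> real" where
  "tnorm_iter 0 x = (SUP j. \<bar>x j\<bar>)"
| "tnorm_iter (Suc m) x = max (tnorm_iter m x)
     ((1/2) * Sup {(\<Sum>i<n. tnorm_iter m (restr (E i) x)) | n E. admissible n E})"

definition tnorm :: "(nat \<Rightarrow> real) \<Rightarrow> real" where
  "tnorm x = (SUP m. tnorm_iter m x)"

text \<open>T^* as a sequence space: coefficient sequences of bounded functionals on
  (c00, ||.||_T), equivalently on its completion T.\<close>
definition tstar_vals :: "(nat \<Rightarrow> real) \<Rightarrow> real set" where
  "tstar_vals y = {\<bar>\<Sum>j\<in>{j. x j \<noteq> 0}. x j * y j\<bar> | x. x \<in> c00 \<and> tnorm x \<le> 1}"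

definition Tstar :: "(nat \<Rightarrow> real) set" where
  "Tstar = {y. y 0 = 0 \<and> bdd_above (tstar_vals y)}"

definition tstar_norm :: "(nat \<Rightarrow> real) \<Rightarrow> real" where
  "tstar_norm y = Sup (tstar_vals y)"

definition lpT :: "real \<Rightarrow> nat \<Rightarrow> (nat \<Rightarrow> nat \<Rightarrow> real) set" where
  "lpT p k = {y. (\<forall>i\<in>{1..k}. y i \<in> Tstar) \<and> (\<forall>i. i \<notin> {1..k} \<longrightarrow> y i = 0)}"

definition lpT_norm :: "real \<Rightarrow> nat \<Rightarrow> (nat \<Rightarrow> nat \<Rightarrow> real) \<Rightarrow> real" where
  "lpT_norm p k y = (\<Sum>i=1..k. tstar_norm (y i) powr p) powr (1/p)"

text \<open>The sum (\<Oplus>_k \<ell>_p^k(T^*))_{T^*}; z k is the k-th component (k \<ge> 1).\<close>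
definition weights :: "real \<Rightarrow> (nat \<Rightarrow> nat \<Rightarrow> nat \<Rightarrow> real) \<Rightarrow> nat \<Rightarrow> real" where
  "weights p z = (\<lambda>k. if k = 0 then 0 else lpT_norm p k (z k))"

definition SumSpace :: "real \<Rightarrow> (nat \<Rightarrow> nat \<Rightarrow> nat \<Rightarrow> real) set" where
  "SumSpace p = {z. z 0 = 0 \<and> (\<forall>k\<ge>1. z k \<in> lpT p k) \<and>
     (\<exists>s\<in>Tstar. (\<lambda>N. tstar_norm (\<lambda>j. s j - (if j \<le> N then weights p z j else 0)))
                  \<longlonglongrightarrow> 0)}"

definition sum_norm :: "real \<Rightarrow> (nat \<Rightarrow> nat \<Rightarrow> nat \<Rightarrow> real) \<Rightarrow> real" where
  "sum_norm p z = tstar_norm (weights p z)"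

definition ksets :: "nat \<Rightarrow> nat set set" where
  "ksets k = {M. finite M \<and> card M = k}"

definition hamming :: "nat \<Rightarrow> nat set \<Rightarrow> nat set \<Rightarrow> nat" where
  "hamming k M N = card {j. j < k \<and> sorted_list_of_set M ! j \<noteq> sorted_list_of_set N ! j}"

end

theory Submission
  imports Defs "HOL-Real_Asymp.Multiseries_Expansion"
begin

(* The k-set M = {m_1 < ... < m_k} is sent to the vector whose k-th summand is
   (e_{m_1}, ..., e_{m_k}) in the l_p^k-sum of T*, all other summands being zero.  On
   finitely supported vectors the Tsirelson norm lies between the sup norm and the l_1
   norm, hence by duality so does the norm of T*.  Thus two distinct unit vectors are at
   distance between 1 and 2 in T*, a pair of k-sets at Hamming distance h is mapped to a
   pair at distance between h^(1/p) and 2 h^(1/p), and rho(t) = t^(1/p) is unbounded. *)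

definition l1_norm :: "(nat \<Rightarrow> real) \<Rightarrow> real" where
  "l1_norm x = (\<Sum>j\<in>{j. x j \<noteq> 0}. \<bar>x j\<bar>)"

lemma l1_norm_nonneg: "l1_norm x \<ge> 0"
  unfolding l1_norm_def by (simp add: sum_nonneg)

lemma abs_le_l1_norm:
  assumes "x \<in> c00"
  shows "\<bar>x j\<bar> \<le> l1_norm x"
proof (cases "x j = 0")
  case False
  have "finite {j. x j \<noteq> 0}" using assms unfolding c00_def by simp
  then show ?thesis unfolding l1_norm_def using False by (intro member_le_sum) auto
qed (simp add: l1_norm_nonneg)

lemma admissible_Max_less_Min:
  assumes "admissible n E" "i < i'" "i' < n"
  shows "Max (E i) < Min (E i')"
  using assms(2,3)
proof (induction i')
  case (Suc i')
  have step: "Max (E i') < Min (E (Suc i'))"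
    using assms(1) Suc.prems unfolding admissible_def by blast
  show ?case
  proof (cases "i = i'")
    case False
    then have "Max (E i) < Min (E i')" using Suc by simp
    moreover have "finite (E i')" "E i' \<noteq> {}"
      using assms(1) Suc.prems unfolding admissible_def by auto
    then have "Min (E i') \<le> Max (E i')" by (meson Max_ge Min_in)
    ultimately show ?thesis using step by linarith
  qed (use step in simp)
qed simp

lemma admissible_disjoint:
  assumes "admissible n E" "i < n" "i' < n" "i \<noteq> i'"
  shows "E i \<inter> E i' = {}"
proof -
  have "E a \<inter> E b = {}" if "a < b" "b < n" for a b
  proof -
    have "finite (E a)" "finite (E b)" using assms(1) that unfolding admissible_def by auto
    then show ?thesis using admissible_Max_less_Min[OF assms(1) that]
      by (meson Max_ge Min_le disjoint_iff not_le order.trans)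
  qed
  then show ?thesis using assms by (metis Int_commute linorder_neqE_nat)
qed

lemma sum_l1_norm_restr_le:
  assumes "x \<in> c00" "admissible n E"
  shows "(\<Sum>i<n. l1_norm (restr (E i) x)) \<le> l1_norm x"
proof -
  let ?S = "{j. x j \<noteq> 0}"
  have fin: "finite ?S" using assms(1) unfolding c00_def by simp
  have "(\<Sum>i<n. l1_norm (restr (E i) x)) = (\<Sum>i<n. \<Sum>j\<in>?S \<inter> E i. \<bar>x j\<bar>)"
    unfolding l1_norm_def restr_def by (intro sum.cong refl) auto
  also have "\<dots> = (\<Sum>j\<in>(\<Union>i<n. ?S \<inter> E i). \<bar>x j\<bar>)"
    by (rule sum.UNION_disjoint[symmetric]) (use fin admissible_disjoint[OF assms(2)] in auto)
  also have "\<dots> \<le> l1_norm x"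
    unfolding l1_norm_def by (rule sum_mono2) (use fin in auto)
  finally show ?thesis .
qed

lemma tnorm_iter_le_l1_norm:
  assumes "x \<in> c00"
  shows "tnorm_iter m x \<le> l1_norm x"
  using assms
proof (induction m arbitrary: x)
  case 0
  then show ?case using abs_le_l1_norm by (simp add: cSUP_least)
next
  case (Suc m)
  let ?A = "{(\<Sum>i<n. tnorm_iter m (restr (E i) x)) | n E. admissible n E}"
  have "a \<le> l1_norm x" if "a \<in> ?A" for a
  proof -
    obtain n E where a: "a = (\<Sum>i<n. tnorm_iter m (restr (E i) x))" "admissible n E"
      using \<open>a \<in> ?A\<close> by blast
    have restr_c00: "restr (E i) x \<in> c00" for i
      using Suc.prems unfolding c00_def restr_def by (auto elim: rev_finite_subset)
    have "a \<le> (\<Sum>i<n. l1_norm (restr (E i) x))"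
      unfolding a(1) by (intro sum_mono Suc.IH restr_c00)
    also have "\<dots> \<le> l1_norm x" using sum_l1_norm_restr_le[OF Suc.prems a(2)] .
    finally show ?thesis .
  qed
  moreover have "admissible 1 (\<lambda>_. {1})" unfolding admissible_def by simp
  then have "?A \<noteq> {}" by blast
  ultimately have "Sup ?A \<le> l1_norm x" by (intro cSup_least) auto
  then show ?case using Suc.IH[OF Suc.prems] l1_norm_nonneg[of x] by simp
qed

lemma tnorm_le_l1_norm: "x \<in> c00 \<Longrightarrow> tnorm x \<le> l1_norm x"
  unfolding tnorm_def using tnorm_iter_le_l1_norm by (simp add: cSUP_least)

lemma abs_le_tnorm:
  assumes "x \<in> c00"
  shows "\<bar>x j\<bar> \<le> tnorm x"
proof -
  have "bdd_above (range (\<lambda>j. \<bar>x j\<bar>))"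
    using abs_le_l1_norm[OF assms] by (intro bdd_aboveI) blast
  then have "\<bar>x j\<bar> \<le> tnorm_iter 0 x" by (auto intro: cSUP_upper)
  also have "\<dots> \<le> tnorm x"
    unfolding tnorm_def
    using tnorm_iter_le_l1_norm[OF assms] by (intro cSUP_upper2[of _ _ 0] bdd_aboveI) auto
  finally show ?thesis .
qed

lemma tstar_norm_c00:
  assumes "y \<in> c00"
  shows "y \<in> Tstar" and "\<bar>y j\<bar> \<le> tstar_norm y" and "tstar_norm y \<le> l1_norm y"
proof -
  have pairing_le: "\<bar>\<Sum>j\<in>{j. x j \<noteq> 0}. x j * y j\<bar> \<le> l1_norm y"
    if "x \<in> c00" "tnorm x \<le> 1" for x
  proof -
    let ?X = "{j. x j \<noteq> 0}" and ?Y = "{j. y j \<noteq> 0}"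
    have fin: "finite ?X" "finite ?Y" using that(1) assms unfolding c00_def by auto
    have "\<bar>x j * y j\<bar> \<le> \<bar>y j\<bar>" for j
      using abs_le_tnorm[OF that(1), of j] that(2) by (simp add: abs_mult mult_left_le_one_le)
    then have "\<bar>\<Sum>j\<in>?X. x j * y j\<bar> \<le> (\<Sum>j\<in>?X. \<bar>y j\<bar>)"
      by (intro order.trans[OF sum_abs] sum_mono)
    also have "\<dots> \<le> (\<Sum>j\<in>?X \<union> ?Y. \<bar>y j\<bar>)" by (rule sum_mono2) (use fin in auto)
    also have "\<dots> = l1_norm y"
      unfolding l1_norm_def by (rule sum.mono_neutral_right) (use fin in auto)
    finally show ?thesis .
  qed
  then have bdd: "bdd_above (tstar_vals y)" unfolding tstar_vals_def by (intro bdd_aboveI) blast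
  have coord_val: "\<bar>y a\<bar> \<in> tstar_vals y" if "a \<ge> 1" for a
  proof -
    let ?e = "indicator {a} :: nat \<Rightarrow> real"
    have supp: "{j. ?e j \<noteq> 0} = {a}" by (auto split: split_indicator)
    have "?e \<in> c00" using that supp unfolding c00_def by simp
    moreover have "tnorm ?e \<le> 1"
      using tnorm_le_l1_norm[OF \<open>?e \<in> c00\<close>] unfolding l1_norm_def supp by simp
    moreover have "(\<Sum>j\<in>{j. ?e j \<noteq> 0}. ?e j * y j) = y a" unfolding supp by simp
    ultimately show ?thesis unfolding tstar_vals_def by force
  qed
  show "y \<in> Tstar" using bdd assms unfolding Tstar_def c00_def by simp
  have coord_le: "\<bar>y a\<bar> \<le> tstar_norm y" if "a \<ge> 1" for a
    unfolding tstar_norm_def using cSup_upper[OF coord_val[OF that] bdd] .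
  show "\<bar>y j\<bar> \<le> tstar_norm y"
  proof (cases "j = 0")
    case True
    then show ?thesis using assms coord_le[of 1] unfolding c00_def by simp
  qed (use coord_le in simp)
  show "tstar_norm y \<le> l1_norm y"
    unfolding tstar_norm_def using coord_val[of 1] pairing_le
    by (intro cSup_least) (auto simp: tstar_vals_def)
qed

lemma zero_in_Tstar: "0 \<in> Tstar"
  using tstar_norm_c00(1)[of 0] by (simp add: c00_def)

lemma tstar_norm_zero: "tstar_norm 0 = 0"
  using tstar_norm_c00[of 0] by (simp add: c00_def l1_norm_def)

lemma tstar_norm_single:
  assumes "a \<ge> 1"
  shows "tstar_norm (\<lambda>j. if j = a then c else 0) = \<bar>c\<bar>"
proof -
  let ?y = "\<lambda>j. if j = a then c else 0"
  have "?y \<in> c00" using assms unfolding c00_def by simp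
  moreover have "l1_norm ?y = \<bar>c\<bar>"
    unfolding l1_norm_def by (cases "c = 0") simp_all
  ultimately show ?thesis using tstar_norm_c00(2)[of ?y a] tstar_norm_c00(3)[of ?y] by simp
qed

lemma tstar_norm_indicator_diff:
  fixes a b :: nat
  assumes "a \<ge> 1" "b \<ge> 1" "a \<noteq> b"
  shows "1 \<le> tstar_norm (indicator {a} - indicator {b})"
    and "tstar_norm (indicator {a} - indicator {b}) \<le> 2"
proof -
  let ?y = "indicator {a} - indicator {b} :: nat \<Rightarrow> real"
  have supp: "{j. ?y j \<noteq> 0} = {a, b}" using assms(3) by (auto split: split_indicator)
  have "finite {j. ?y j \<noteq> 0}" unfolding supp by simp
  then have "?y \<in> c00" using assms unfolding c00_def by (simp split: split_indicator)
  moreover have "l1_norm ?y = 2" unfolding l1_norm_def supp using assms(3) by simp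
  ultimately show "1 \<le> tstar_norm ?y" "tstar_norm ?y \<le> 2"
    using tstar_norm_c00(2)[of ?y a] tstar_norm_c00(3)[of ?y] assms(3) by simp_all
qed

lemma sum_powr_root_bounds:
  fixes t :: "'a \<Rightarrow> real"
  assumes "finite I" "p > 0" and t: "\<And>i. i \<in> I \<Longrightarrow> t i = 0 \<or> 1 \<le> t i \<and> t i \<le> C"
  shows "real (card {i\<in>I. t i \<noteq> 0}) powr (1/p) \<le> (\<Sum>i\<in>I. t i powr p) powr (1/p)"
    and "(\<Sum>i\<in>I. t i powr p) powr (1/p) \<le> C * real (card {i\<in>I. t i \<noteq> 0}) powr (1/p)"
proof -
  let ?J = "{i\<in>I. t i \<noteq> 0}"
  have sum_J: "(\<Sum>i\<in>I. t i powr p) = (\<Sum>i\<in>?J. t i powr p)"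
    by (rule sum.mono_neutral_right) (use assms(1) in auto)
  have bounds_J: "1 \<le> t i powr p \<and> t i powr p \<le> C powr p" if "i \<in> ?J" for i
    using t[of i] that assms(2) by (auto intro: ge_one_powr_ge_zero powr_mono2)
  have lower: "real (card ?J) \<le> (\<Sum>i\<in>?J. t i powr p)"
    unfolding real_of_card using bounds_J by (intro sum_mono) auto
  have "(\<Sum>i\<in>?J. t i powr p) \<le> (\<Sum>i\<in>?J. C powr p)"
    using bounds_J by (intro sum_mono) auto
  then have upper: "(\<Sum>i\<in>?J. t i powr p) \<le> C powr p * real (card ?J)"
    by (simp add: mult.commute)
  show "real (card ?J) powr (1/p) \<le> (\<Sum>i\<in>I. t i powr p) powr (1/p)"
    unfolding sum_J using lower assms(2) by (intro powr_mono2) auto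
  show "(\<Sum>i\<in>I. t i powr p) powr (1/p) \<le> C * real (card ?J) powr (1/p)"
  proof (cases "?J = {}")
    case False
    then have "C \<ge> 0" using t by force
    have "(\<Sum>i\<in>I. t i powr p) powr (1/p) \<le> (C powr p * real (card ?J)) powr (1/p)"
      unfolding sum_J using upper assms(2) by (intro powr_mono2) (auto intro: sum_nonneg)
    also have "\<dots> = C * real (card ?J) powr (1/p)"
      using \<open>C \<ge> 0\<close> assms(2) by (simp add: powr_mult powr_powr)
    finally show ?thesis .
  next
    case True
    then show ?thesis unfolding sum_J True by simp
  qed
qed

lemma lpT_norm_zero: "lpT_norm p k 0 = 0"
  unfolding lpT_norm_def by (simp add: zero_fun_def[symmetric] tstar_norm_zero)

lemma weights_single_block:
  assumes "k \<ge> 1" "\<And>k'. k' \<noteq> k \<Longrightarrow> z k' = 0"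
  shows "weights p z = (\<lambda>j. if j = k then lpT_norm p k (z k) else 0)"
  using assms by (auto simp: weights_def lpT_norm_zero)

lemma sum_norm_single_block:
  assumes "k \<ge> 1" "\<And>k'. k' \<noteq> k \<Longrightarrow> z k' = 0"
  shows "sum_norm p z = lpT_norm p k (z k)"
proof -
  have "weights p z = (\<lambda>j. if j = k then lpT_norm p k (z k) else 0)"
    by (rule weights_single_block) (use assms in auto)
  then show ?thesis
    unfolding sum_norm_def using tstar_norm_single[OF assms(1)] by (simp add: lpT_norm_def)
qed

lemma single_block_in_SumSpace:
  assumes "k \<ge> 1" "\<And>k'. k' \<noteq> k \<Longrightarrow> z k' = 0" "z k \<in> lpT p k"
  shows "z \<in> SumSpace p"
proof -
  let ?w = "weights p z"
  have w: "?w = (\<lambda>j. if j = k then lpT_norm p k (z k) else 0)"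
    by (rule weights_single_block) (use assms in auto)
  then have "?w \<in> c00" unfolding c00_def using assms(1) by simp
  then have "?w \<in> Tstar" by (rule tstar_norm_c00(1))
  moreover have "(\<lambda>j. ?w j - (if j \<le> n then ?w j else 0)) = 0" if "n \<ge> k" for n
    using that unfolding w by auto
  then have "(\<lambda>n. tstar_norm (\<lambda>j. ?w j - (if j \<le> n then ?w j else 0))) \<longlonglongrightarrow> 0"
    by (intro tendsto_eventually eventually_sequentiallyI[of k]) (simp add: tstar_norm_zero)
  moreover have "z k' \<in> lpT p k'" for k'
    using assms zero_in_Tstar by (cases "k' = k") (auto simp: lpT_def)
  ultimately show ?thesis unfolding SumSpace_def using assms(1,2) by auto
qed

(* Shifted by one, since coordinate 0 is not part of T*. *)
definition hamming_embedding :: "nat \<Rightarrow> nat set \<Rightarrow> nat \<Rightarrow> nat \<Rightarrow> nat \<Rightarrow> real" where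
  "hamming_embedding k M = (\<lambda>k' i. if k' = k \<and> i \<in> {1..k}
     then indicator {sorted_list_of_set M ! (i - 1) + 1} else 0)"

lemma hamming_embedding_in_SumSpace:
  assumes "k \<ge> 1"
  shows "hamming_embedding k M \<in> SumSpace p"
proof (rule single_block_in_SumSpace[OF assms])
  have "indicator {a} \<in> Tstar" if "a \<ge> 1" for a :: nat
    using that by (intro tstar_norm_c00(1)) (simp add: c00_def split: split_indicator)
  then show "hamming_embedding k M k \<in> lpT p k"
    unfolding lpT_def hamming_embedding_def using zero_in_Tstar by auto
qed (simp add: hamming_embedding_def fun_eq_iff)

lemma sum_norm_hamming_embedding_diff:
  assumes "p > 0" "k \<ge> 1"
  shows "real (hamming k M N) powr (1/p)
           \<le> sum_norm p (hamming_embedding k M - hamming_embedding k N)"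
    and "sum_norm p (hamming_embedding k M - hamming_embedding k N)
           \<le> 2 * real (hamming k M N) powr (1/p)"
proof -
  let ?z = "hamming_embedding k M - hamming_embedding k N"
  let ?differ = "\<lambda>j. sorted_list_of_set M ! j \<noteq> sorted_list_of_set N ! j"
  define t where "t j = tstar_norm (?z k (Suc j))" for j
  have "sum_norm p ?z = lpT_norm p k (?z k)"
    by (rule sum_norm_single_block) (use assms(2) in \<open>auto simp: hamming_embedding_def\<close>)
  also have "\<dots> = (\<Sum>j<k. t j powr p) powr (1/p)"
    unfolding lpT_norm_def t_def sum_bounds_lt_plus1[symmetric] ..
  finally have norm_eq: "sum_norm p ?z = (\<Sum>j<k. t j powr p) powr (1/p)" .
  have t_cases: "(?differ j \<longrightarrow> 1 \<le> t j \<and> t j \<le> 2) \<and> (\<not> ?differ j \<longrightarrow> t j = 0)"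
    if "j < k" for j
  proof -
    have "?z k (Suc j) = indicator {sorted_list_of_set M ! j + 1}
                         - indicator {sorted_list_of_set N ! j + 1}"
      using that by (simp add: hamming_embedding_def)
    then show ?thesis using tstar_norm_indicator_diff tstar_norm_zero by (auto simp: t_def)
  qed
  then have "{j\<in>{..<k}. t j \<noteq> 0} = {j. j < k \<and> ?differ j}" by force
  then have card: "card {j\<in>{..<k}. t j \<noteq> 0} = hamming k M N" unfolding hamming_def by simp
  have "t j = 0 \<or> 1 \<le> t j \<and> t j \<le> 2" if "j \<in> {..<k}" for j
    using t_cases that by auto
  note bounds = sum_powr_root_bounds[of "{..<k}" p t 2, OF finite_lessThan assms(1) this]
  show "real (hamming k M N) powr (1/p) \<le> sum_norm p ?z"
    "sum_norm p ?z \<le> 2 * real (hamming k M N) powr (1/p)"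
    using bounds unfolding norm_eq card by simp_all
qed

theorem proposition4p2:
  fixes p :: real
  assumes "1 \<le> p"
  shows "\<exists>(\<rho>::real \<Rightarrow> real) (\<omega>::real \<Rightarrow> real)
            (f :: nat \<Rightarrow> nat set \<Rightarrow> nat \<Rightarrow> nat \<Rightarrow> nat \<Rightarrow> real).
     mono_on {0..} \<rho> \<and> mono_on {0..} \<omega> \<and>
     (\<forall>t\<ge>0. \<rho> t \<ge> 0 \<and> \<omega> t \<ge> 0) \<and>
     filterlim \<rho> at_top at_top \<and>
     (\<forall>k\<ge>1. \<forall>M\<in>ksets k. f k M \<in> SumSpace p) \<and>
     (\<forall>k\<ge>1. \<forall>M\<in>ksets k. \<forall>N\<in>ksets k.
        \<rho> (real (hamming k M N)) \<le> sum_norm p (f k M - f k N) \<and>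
        sum_norm p (f k M - f k N) \<le> \<omega> (real (hamming k M N)))"
proof (intro exI conjI)
  have p: "p > 0" using assms by simp
  show "mono_on {0..} (\<lambda>t::real. t powr (1/p))"
    using p by (intro mono_onI powr_mono2) auto
  show "mono_on {0..} (\<lambda>t::real. 2 * t powr (1/p))"
    using p by (intro mono_onI) (auto intro: powr_mono2)
  show "\<forall>t\<ge>0. t powr (1/p) \<ge> 0 \<and> 2 * t powr (1/p) \<ge> (0::real)" by simp
  show "filterlim (\<lambda>t::real. t powr (1/p)) at_top at_top"
    using p by (intro real_powr_at_top) simp
  show "\<forall>k\<ge>1. \<forall>M\<in>ksets k. hamming_embedding k M \<in> SumSpace p"
    using hamming_embedding_in_SumSpace by blast
  show "\<forall>k\<ge>1. \<forall>M\<in>ksets k. \<forall>N\<in>ksets k.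
      real (hamming k M N) powr (1/p) \<le> sum_norm p (hamming_embedding k M - hamming_embedding k N) \<and>
      sum_norm p (hamming_embedding k M - hamming_embedding k N) \<le> 2 * real (hamming k M N) powr (1/p)"
    using sum_norm_hamming_embedding_diff[OF p] by blast
qed

end
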